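(* Let $h\ge0$ be a measurable function on $\mathbb R_+$ and let $\alpha=\{\alpha_n\}_{n\ge0}$ be a sequence with $\alpha_n\in[3,4]$ for all $n$, such that $[h,\alpha]<\infty$. Then $[h]_{2,\ell^1}<\infty$ (i.e. $h\in A_2(\mathbb R_+,\ell^1)$), and $[h]_{2,\ell^1}\le c\,[h,\alpha]$ for an absolute constant $c$.
   Context: For a nonnegative $f$ and a set $E$ of positive measure, $\langle f\rangle_E=\frac1{|E|}\int_Ef\,dx$. For $x,y\ge0$, $I_{x,y}=[x,x+y)$. For $h\ge0$ on $\mathbb R_+$ and a sequence $\alpha=\{\alpha_n\}$ of positive numbers, $[h,\alpha]=\sum_{n=0}^\infty\big(\langle h\rangle_{I_{n,\alpha_n}}\langle h^{-1}\rangle_{I_{n,\alpha_n}}-1\big)\in[0,\infty]$. $[h]_{2,\ell^1}=[h,\mathbf 2]$, where $\mathbf 2$ is the constant sequence $2,2,\dots$; $A_2(\mathbb R_+,\ell^1)$ is the class of $h\ge0$ with $[h]_{2,\ell^1}<\infty$. *)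

theory Defs
  imports "HOL-Analysis.Analysis"
begin

definition avg :: "(real \<Rightarrow> ennreal) \<Rightarrow> real set \<Rightarrow> ennreal" where
  "avg f E = (\<integral>\<^sup>+ x\<in>E. f x \<partial>lborel) / emeasure lborel E"

definition Ivl :: "real \<Rightarrow> real \<Rightarrow> real set" where
  "Ivl x y = {x..<x+y}"

text \<open>[h,alpha] in [0,\<infinity>]; h^{-1} is taken in [0,\<infinity>] (so 1/0 = \<infinity>).\<close>
definition bracket :: "(real \<Rightarrow> real) \<Rightarrow> (nat \<Rightarrow> real) \<Rightarrow> ennreal" where
  "bracket h \<alpha> = (\<Sum>n. avg (\<lambda>x. ennreal (h x)) (Ivl (real n) (\<alpha> n))
                       * avg (\<lambda>x. inverse (ennreal (h x))) (Ivl (real n) (\<alpha> n)) - 1)"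

definition A2_l1_const :: "(real \<Rightarrow> real) \<Rightarrow> ennreal" where
  "A2_l1_const h = bracket h (\<lambda>_. 2)"

end

theory Submission
  imports Defs
begin

text \<open>
  Integrating the pointwise AM-GM inequality \<open>2t \<le> h + t\<^sup>2/h\<close> and optimising over \<open>t\<close> gives
  the Cauchy-Schwarz bound \<open>|E|\<^sup>2 \<le> (\<integral>\<^sub>E h)(\<integral>\<^sub>E 1/h)\<close>. Split \<open>I = [n, n + \<alpha>\<^sub>n)\<close> into
  \<open>J = [n, n + 2)\<close> and the rest \<open>K\<close>: applying the bound on \<open>J\<close> and \<open>K\<close>, the cross terms of
  \<open>(\<integral>\<^sub>I h)(\<integral>\<^sub>I 1/h)\<close> are at least \<open>2|J||K|\<close>, hence
  \<open>|J|\<^sup>2(\<langle>h\<rangle>\<^sub>J\<langle>1/h\<rangle>\<^sub>J - 1) \<le> |I|\<^sup>2(\<langle>h\<rangle>\<^sub>I\<langle>1/h\<rangle>\<^sub>I - 1)\<close>. As \<open>|J| = 2\<close> and \<open>|I| \<le> 4\<close>, each term of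
  the series \<open>A2_l1_const h\<close> is at most 4 times the corresponding term of \<open>bracket h \<alpha>\<close>, so
  \<open>c = 4\<close> works.
\<close>

definition avg_product :: "(real \<Rightarrow> real) \<Rightarrow> real set \<Rightarrow> ennreal" where
  "avg_product h E = avg (\<lambda>x. ennreal (h x)) E * avg (\<lambda>x. inverse (ennreal (h x))) E"

lemma bracket_eq_suminf_avg_product:
  "bracket h \<alpha> = (\<Sum>n. avg_product h (Ivl (real n) (\<alpha> n)) - 1)"
  by (simp add: bracket_def avg_product_def)

lemma avg_product_cong:
  assumes "\<And>x. x \<in> E \<Longrightarrow> h x = g x"
  shows "avg_product h E = avg_product g E"
proof -
  have "(\<lambda>x. f (h x) * indicator E x) = (\<lambda>x. f (g x) * indicator E x)" for f :: "real \<Rightarrow> ennreal"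
    using assms by (auto simp: indicator_def)
  from this[of ennreal] this[of "\<lambda>y. inverse (ennreal y)"] show ?thesis
    by (simp add: avg_product_def avg_def)
qed

lemma two_mult_le_add_inverse_ennreal:
  fixes t y :: real
  assumes "t > 0" "y \<ge> 0"
  shows "ennreal (2*t) \<le> ennreal y + ennreal (t^2) * inverse (ennreal y)"
proof (cases "y = 0")
  case True
  then show ?thesis using assms by simp
next
  case False
  with assms have y: "y > 0" by simp
  have "2*t*y \<le> y*y + t^2" using sum_squares_ge_zero[of "y - t" 0]
    by (simp add: power2_eq_square algebra_simps)
  then have "2*t \<le> y + t^2 * (1/y)" using y by (simp add: field_simps power2_eq_square)
  then show ?thesis using y assms
    by (simp add: inverse_ennreal inverse_eq_divide ennreal_mult''[symmetric]
        ennreal_plus[symmetric] del: ennreal_plus)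
qed

lemma nn_set_integral_AM_GM:
  fixes h :: "'a \<Rightarrow> real"
  assumes [measurable]: "h \<in> borel_measurable M" "E \<in> sets M"
    and "\<And>x. h x \<ge> 0" "t > 0"
  shows "ennreal (2*t) * emeasure M E \<le>
    (\<integral>\<^sup>+x\<in>E. ennreal (h x) \<partial>M) + ennreal (t^2) * (\<integral>\<^sup>+x\<in>E. inverse (ennreal (h x)) \<partial>M)"
proof -
  have "ennreal (2*t) * emeasure M E = (\<integral>\<^sup>+x\<in>E. ennreal (2*t) \<partial>M)"
    by (simp add: nn_integral_cmult_indicator)
  also have "\<dots> \<le> (\<integral>\<^sup>+x\<in>E. (ennreal (h x) + ennreal (t^2) * inverse (ennreal (h x))) \<partial>M)"
    using assms by (intro nn_integral_mono mult_right_mono two_mult_le_add_inverse_ennreal) auto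
  also have "\<dots> = (\<integral>\<^sup>+x\<in>E. ennreal (h x) \<partial>M) + ennreal (t^2) * (\<integral>\<^sup>+x\<in>E. inverse (ennreal (h x)) \<partial>M)"
    by (simp add: distrib_right mult.assoc nn_integral_add nn_integral_cmult)
  finally show ?thesis .
qed

lemma square_le_mult_if_AM_GM:
  fixes a b m :: real
  assumes "m \<ge> 0" "a \<ge> 0" "b \<ge> 0"
    and AM_GM: "\<And>t. t > 0 \<Longrightarrow> 2*t*m \<le> a + t^2 * b"
  shows "m^2 \<le> a*b"
proof (cases "m = 0")
  case True
  then show ?thesis using assms by simp
next
  case False
  with assms have m: "m > 0" by simp
  show ?thesis
  proof (cases "b = 0")
    case True
    have "2 * ((a+1)/m) * m \<le> a" using AM_GM[of "(a+1)/m"] m assms True by simp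
    then show ?thesis using m assms by simp
  next
    case False
    with assms have b: "b > 0" by simp
    have "2 * (m/b) * m \<le> a + (m/b)^2 * b" using AM_GM[of "m/b"] m b by simp
    then show ?thesis using b by (simp add: field_simps power2_eq_square)
  qed
qed

lemma nn_set_integral_Cauchy_Schwarz_inverse:
  fixes h :: "'a \<Rightarrow> real"
  assumes [measurable]: "h \<in> borel_measurable M" "E \<in> sets M" and "\<And>x. h x \<ge> 0"
    and "emeasure M E = ennreal m" "m \<ge> 0"
    and "(\<integral>\<^sup>+x\<in>E. ennreal (h x) \<partial>M) = ennreal a" "a \<ge> 0"
    and "(\<integral>\<^sup>+x\<in>E. inverse (ennreal (h x)) \<partial>M) = ennreal b" "b \<ge> 0"
  shows "m^2 \<le> a*b"
proof (rule square_le_mult_if_AM_GM)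
  fix t :: real assume t: "t > 0"
  have "ennreal (2*t) * ennreal m \<le> ennreal a + ennreal (t^2) * ennreal b"
    using nn_set_integral_AM_GM[of h M E t] assms t by simp
  then show "2*t*m \<le> a + t^2*b"
    using assms t by (simp add: ennreal_mult''[symmetric] ennreal_plus[symmetric] del: ennreal_plus)
qed (use assms in auto)

lemma nn_set_integral_inverse_ennreal_not_0:
  fixes h :: "'a \<Rightarrow> real"
  assumes [measurable]: "h \<in> borel_measurable M" "E \<in> sets M" and "emeasure M E \<noteq> 0"
  shows "(\<integral>\<^sup>+x\<in>E. inverse (ennreal (h x)) \<partial>M) \<noteq> 0"
proof
  assume "(\<integral>\<^sup>+x\<in>E. inverse (ennreal (h x)) \<partial>M) = 0"
  then have "AE x in M. x \<notin> E"
    by (subst (asm) nn_integral_0_iff_AE) (auto simp: indicator_def)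
  then show False
    using assms AE_iff_null_sets[of E M] by auto
qed

lemma mult_minus_square_le_add:
  fixes a b a' b' m m' :: real
  assumes "a \<ge> 0" "b \<ge> 0" "a' \<ge> 0" "b' \<ge> 0" "m \<ge> 0" "m' \<ge> 0"
    and "m^2 \<le> a*b" "m'^2 \<le> a'*b'"
  shows "a*b - m^2 \<le> (a+a')*(b+b') - (m+m')^2"
proof -
  define x y where "x = a*b'" and "y = a'*b"
  have "(2*m*m')^2 = 4*(m^2*m'^2)" by (simp add: power_mult_distrib)
  also have "\<dots> \<le> 4*((a*b)*(a'*b'))" using assms by (intro mult_left_mono mult_mono) auto
  also have "\<dots> = 4*(x*y)" by (simp add: x_def y_def algebra_simps)
  also have "\<dots> \<le> (x+y)^2" using sum_squares_ge_zero[of "x-y" 0]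
    by (simp add: power2_eq_square algebra_simps)
  finally have "(2*m*m')^2 \<le> (x+y)^2" .
  moreover have "0 \<le> x+y" using assms by (simp add: x_def y_def)
  ultimately have "2*m*m' \<le> x+y" by (rule power2_le_imp_le)
  then show ?thesis using assms by (simp add: x_def y_def power2_eq_square algebra_simps)
qed

lemma normalized_excess_le:
  fixes a b a' b' l L :: real
  assumes "a \<ge> 0" "b \<ge> 0" "a' \<ge> 0" "b' \<ge> 0" "0 < l" "l \<le> L"
    and "l^2 \<le> a*b" "(L-l)^2 \<le> a'*b'"
  shows "a*b/l^2 - 1 \<le> (L/l)^2 * ((a+a')*(b+b')/L^2 - 1)"
proof -
  have "a*b - l^2 \<le> (a+a')*(b+b') - L^2"
    using assms mult_minus_square_le_add[of a b a' b' l "L-l"] by simp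
  then have "(a*b - l^2) / l^2 \<le> ((a+a')*(b+b') - L^2) / l^2"
    by (rule divide_right_mono) simp
  then show ?thesis
    using assms by (simp add: diff_divide_distrib power_divide right_diff_distrib)
qed

lemma nn_integral_Ivl_split:
  assumes "f \<in> borel_measurable lborel" "0 \<le> l" "l \<le> L"
  shows "(\<integral>\<^sup>+x\<in>Ivl s L. f x \<partial>lborel)
    = (\<integral>\<^sup>+x\<in>Ivl s l. f x \<partial>lborel) + (\<integral>\<^sup>+x\<in>{s+l..<s+L}. f x \<partial>lborel)"
proof -
  have "Ivl s L = Ivl s l \<union> {s+l..<s+L}" "Ivl s l \<inter> {s+l..<s+L} = {}"
    using assms by (auto simp: Ivl_def)
  then show ?thesis
    using assms by (simp add: nn_integral_disjoint_pair Ivl_def)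
qed

lemma avg_product_Ivl:
  assumes "0 < r"
  shows "avg_product h (Ivl s r) =
    (\<integral>\<^sup>+x\<in>Ivl s r. ennreal (h x) \<partial>lborel) * (\<integral>\<^sup>+x\<in>Ivl s r. inverse (ennreal (h x)) \<partial>lborel)
      * ennreal (1/r^2)"
proof -
  have "emeasure lborel (Ivl s r) = ennreal r" using assms by (simp add: Ivl_def)
  moreover have "ennreal (1/r^2) = ennreal (1/r) * ennreal (1/r)"
    using assms by (simp add: ennreal_mult''[symmetric] power2_eq_square)
  ultimately show ?thesis using assms
    by (simp add: avg_product_def avg_def divide_ennreal_def inverse_ennreal inverse_eq_divide mult_ac)
qed

lemma avg_product_Ivl_excess_le:
  fixes h :: "real \<Rightarrow> real"
  assumes [measurable]: "h \<in> borel_measurable lborel" and "\<And>x. h x \<ge> 0"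
    and "0 < l" "l \<le> L"
  shows "avg_product h (Ivl s l) - 1 \<le> ennreal ((L/l)^2) * (avg_product h (Ivl s L) - 1)"
proof -
  define A where "A E = (\<integral>\<^sup>+x\<in>E. ennreal (h x) \<partial>lborel)" for E
  define B where "B E = (\<integral>\<^sup>+x\<in>E. inverse (ennreal (h x)) \<partial>lborel)" for E
  define J I K where "J = Ivl s l" and "I = Ivl s L" and "K = {s+l..<s+L}"
  have AI: "A I = A J + A K" and BI: "B I = B J + B K"
    using assms by (simp_all add: A_def B_def I_def J_def K_def nn_integral_Ivl_split)
  have avg_J: "avg_product h J = A J * B J * ennreal (1/l^2)"
    and avg_I: "avg_product h I = A I * B I * ennreal (1/L^2)"
    using assms by (simp_all add: A_def B_def J_def I_def avg_product_Ivl)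
  consider "A I = 0" | "A I \<noteq> 0" "A I = \<infinity> \<or> B I = \<infinity>" | "A I \<noteq> \<infinity>" "B I \<noteq> \<infinity>"
    by blast
  then show ?thesis
  proof cases
    case 1
    \<comment> \<open>then h = 0 a.e. on J and, as 0 * \<infinity> = 0 in ennreal, the left-hand side vanishes\<close>
    then show ?thesis by (simp add: avg_J AI J_def[symmetric])
  next
    case 2
    have "B I \<noteq> 0"
      unfolding B_def using assms by (intro nn_set_integral_inverse_ennreal_not_0) (auto simp: I_def Ivl_def)
    with 2 have "avg_product h I = \<infinity>" using assms by (auto simp: avg_I ennreal_mult_eq_top_iff)
    then show ?thesis using assms by (simp add: I_def J_def ennreal_mult_top)
  next
    case 3
    define aJ aK bJ bK where "aJ = enn2real (A J)" and "aK = enn2real (A K)"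
      and "bJ = enn2real (B J)" and "bK = enn2real (B K)"
    have reals: "A J = ennreal aJ" "A K = ennreal aK" "B J = ennreal bJ" "B K = ennreal bK"
      using 3 by (simp_all add: AI BI aJ_def aK_def bJ_def bK_def ennreal_enn2real_if)
    have nonneg: "aJ \<ge> 0" "aK \<ge> 0" "bJ \<ge> 0" "bK \<ge> 0"
      by (simp_all add: aJ_def aK_def bJ_def bK_def)
    have "l^2 \<le> aJ*bJ"
      using reals nonneg assms unfolding A_def B_def
      by (intro nn_set_integral_Cauchy_Schwarz_inverse[of h lborel J]) (auto simp: J_def Ivl_def)
    moreover have "(L-l)^2 \<le> aK*bK"
      using reals nonneg assms unfolding A_def B_def
      by (intro nn_set_integral_Cauchy_Schwarz_inverse[of h lborel K]) (auto simp: K_def)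
    ultimately have "aJ*bJ/l^2 - 1 \<le> (L/l)^2 * ((aJ+aK)*(bJ+bK)/L^2 - 1)"
      using nonneg assms by (intro normalized_excess_le) auto
    moreover have "avg_product h J - 1 = ennreal (aJ*bJ/l^2 - 1)"
      using nonneg by (simp add: avg_J reals ennreal_mult''[symmetric] ennreal_minus[symmetric]
          del: ennreal_minus)
    moreover have "avg_product h I - 1 = ennreal ((aJ+aK)*(bJ+bK)/L^2 - 1)"
      using nonneg by (simp add: avg_I AI BI reals ennreal_plus[symmetric] ennreal_mult''[symmetric]
          ennreal_minus[symmetric] del: ennreal_plus ennreal_minus)
    ultimately show ?thesis
      unfolding J_def I_def by (simp add: ennreal_mult'[symmetric] ennreal_leI)
  qed
qed

theorem proposition4p1:
  shows "\<exists>c::real. c > 0 \<and>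
    (\<forall>(h::real \<Rightarrow> real) (\<alpha>::nat \<Rightarrow> real).
       h \<in> borel_measurable (restrict_space lborel {0..}) \<longrightarrow>
       (\<forall>x\<ge>0. h x \<ge> 0) \<longrightarrow>
       (\<forall>n. 3 \<le> \<alpha> n \<and> \<alpha> n \<le> 4) \<longrightarrow>
       bracket h \<alpha> < \<infinity> \<longrightarrow>
       A2_l1_const h < \<infinity> \<and> A2_l1_const h \<le> ennreal c * bracket h \<alpha>)"
proof (intro exI[of _ 4] conjI allI impI)
  fix h :: "real \<Rightarrow> real" and \<alpha> :: "nat \<Rightarrow> real"
  assume h_meas: "h \<in> borel_measurable (restrict_space lborel {0..})"
    and h_nonneg: "\<forall>x\<ge>0. h x \<ge> 0" and \<alpha>: "\<forall>n. 3 \<le> \<alpha> n \<and> \<alpha> n \<le> 4"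
    and finite: "bracket h \<alpha> < \<infinity>"
  define g where "g x = indicator {0..} x *\<^sub>R h x" for x
  have "g \<in> borel_measurable lborel"
    using h_meas unfolding g_def by (subst (asm) borel_measurable_restrict_space_iff) auto
  moreover have "g x \<ge> 0" for x using h_nonneg by (simp add: g_def indicator_def)
  moreover have "2 \<le> \<alpha> n" for n using \<alpha>[rule_format, of n] by linarith
  ultimately have excess: "avg_product g (Ivl (real n) 2) - 1
      \<le> ennreal ((\<alpha> n / 2)^2) * (avg_product g (Ivl (real n) (\<alpha> n)) - 1)" for n
    by (intro avg_product_Ivl_excess_le) auto
  have g_eq: "avg_product h (Ivl (real n) c) = avg_product g (Ivl (real n) c)" for n c
    by (rule avg_product_cong) (simp add: g_def Ivl_def)
  have "A2_l1_const h = (\<Sum>n. avg_product g (Ivl (real n) 2) - 1)"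
    by (simp add: A2_l1_const_def bracket_eq_suminf_avg_product g_eq)
  also have "\<dots> \<le> (\<Sum>n. 4 * (avg_product g (Ivl (real n) (\<alpha> n)) - 1))"
  proof (intro suminf_le summableI order.trans[OF excess] mult_right_mono)
    fix n
    have "(\<alpha> n / 2)^2 \<le> 2^2"
      using \<alpha>[rule_format, of n] by (intro power_mono) auto
    then show "ennreal ((\<alpha> n / 2)^2) \<le> 4"
      using ennreal_leI by fastforce
  qed simp
  also have "\<dots> = 4 * bracket h \<alpha>"
    by (simp add: bracket_eq_suminf_avg_product g_eq)
  finally show le: "A2_l1_const h \<le> ennreal 4 * bracket h \<alpha>" by simp
  with finite show "A2_l1_const h < \<infinity>"
    by (simp add: ennreal_mult_less_top le_less_trans)
qed simp

end
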